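(* Let $\mathbf{k}$ be an admissible index. Then the multiple series defining $Z(\mathbf{k};\alpha,\beta)$ converges absolutely for $(\alpha,\beta)\in\{(\alpha,\beta)\in\mathbb{C}^2:\mathrm{Re}\,\alpha>0,\ \beta\notin\mathbb{Z}_{\le0}\}$ and uniformly on every compact subset of this set.
   Context: An index $(k_1,\ldots,k_n)$ is admissible if all $k_i$ are positive integers and $k_n\ge2$. For $a\in\mathbb{C}$, $(a)_0=1$ and $(a)_m=a(a+1)\cdots(a+m-1)$ for $m\ge1$. For an admissible index $\mathbf{k}=(k_1,\ldots,k_n)$, \[ Z(k_1,\ldots,k_n;\alpha,\beta)=\sum_{0\le m_1<\cdots<m_n}\frac{(\alpha)_{m_1}}{m_1!}\frac{m_n!}{(\alpha)_{m_n+1}}\frac{1}{(m_1+\beta)^{k_1}\cdots(m_{n-1}+\beta)^{k_{n-1}}(m_n+\beta)^{k_n-1}}. \] *)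

theory Defs
  imports "HOL-Analysis.Analysis"
begin

definition admissible :: "nat list \<Rightarrow> bool" where
  "admissible k \<longleftrightarrow> k \<noteq> [] \<and> (\<forall>x\<in>set k. 0 < x) \<and> 2 \<le> last k"

definition Zdom :: "nat \<Rightarrow> nat list set" where
  "Zdom n = {ms. length ms = n \<and> sorted_wrt (<) ms}"

definition Zterm :: "nat list \<Rightarrow> complex \<Rightarrow> complex \<Rightarrow> nat list \<Rightarrow> complex" where
  "Zterm k \<alpha> \<beta> ms =
     pochhammer \<alpha> (hd ms) / fact (hd ms)
     * (fact (last ms) / pochhammer \<alpha> (last ms + 1))
     / ((\<Prod>i<length k - 1. (of_nat (ms ! i) + \<beta>) ^ (k ! i))
        * (of_nat (last ms) + \<beta>) ^ (last k - 1))"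

definition Zparams :: "(complex \<times> complex) set" where
  "Zparams = {(\<alpha>, \<beta>). 0 < Re \<alpha> \<and> (\<forall>j::nat. \<beta> \<noteq> - of_nat j)}"

end

(*
  On a compact set of parameters, Re \<alpha> \<ge> a > 0 and |m + \<beta>| \<ge> c (m + 1) uniformly. For
  m_1 < ... < m_n the Pochhammer part of the summand is then at most m_n! / (a)_(m_n+1), which is
  O((m_n + 1)^(-a)) by Gauss's formula for \<Gamma>(a); admissibility makes every exponent in the
  denominator at least 1, so the summand is O((m_n + 1)^(-a) / \<Prod>(m_i + 1)). As m_n is the
  largest variable this is O(\<Prod>(m_i + 1)^(-1 - a/n)), a summable majorant independent of the
  parameters, and the Weierstrass M-test gives absolute and locally uniform convergence.
*)
theory Submission
  imports Defs
begin

lemma prod_list_map_conv_prod_nth: "prod_list (map f xs) = (\<Prod>i<length xs. f (xs ! i))"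
  by (induction xs) (simp_all del: prod.lessThan_Suc add: prod.lessThan_Suc_shift)

lemma summable_on_prod_list_length:
  fixes f :: "'a \<Rightarrow> real"
  assumes f_nonneg: "\<And>x. 0 \<le> f x" and f_summable: "f summable_on UNIV"
  shows "(\<lambda>xs. prod_list (map f xs)) summable_on {xs. length xs = n}"
proof (induction n)
  case 0
  have "{xs::'a list. length xs = 0} = {[]}" by auto
  then show ?case by simp
next
  case (Suc n)
  let ?P = "\<lambda>xs. prod_list (map f xs)" and ?L = "{xs::'a list. length xs = n}"
  have "(\<lambda>(x, xs). f x * ?P xs) summable_on UNIV \<times> ?L"
  proof (rule summable_on_SigmaI[where g = "\<lambda>x. f x * infsum ?P ?L"])
    show "((\<lambda>y. case (x, y) of (x, xs) \<Rightarrow> f x * ?P xs) has_sum f x * infsum ?P ?L) ?L" for x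
      using has_sum_cmult_right[OF Suc[unfolded summable_iff_has_sum_infsum], of "f x"] by simp
    show "(\<lambda>x. f x * infsum ?P ?L) summable_on UNIV"
      using summable_on_cmult_left[OF f_summable] by simp
    show "0 \<le> (case (x, xs) of (x, xs) \<Rightarrow> f x * ?P xs)" for x xs
      using f_nonneg by (auto intro!: mult_nonneg_nonneg prod_list_nonneg)
  qed
  moreover have "inj_on (\<lambda>(x, xs). x # xs) (UNIV \<times> ?L)"
    by (auto simp: inj_on_def)
  moreover have "{xs. length xs = Suc n} = (\<lambda>(x, xs). x # xs) ` (UNIV \<times> ?L)"
    by (auto simp: length_Suc_conv image_iff)
  ultimately show ?case
    by (simp add: summable_on_reindex comp_def case_prod_unfold)
qed

lemma pochhammer_le_norm_pochhammer:
  fixes z :: complex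
  assumes "0 \<le> a" "a \<le> Re z"
  shows "pochhammer a n \<le> norm (pochhammer z n)"
proof -
  have "pochhammer a n = (\<Prod>i<n. a + of_nat i)" by (simp add: pochhammer_prod atLeast0LessThan)
  also have "\<dots> \<le> (\<Prod>i<n. norm (z + of_nat i))"
  proof (rule prod_mono)
    fix i
    have "a + of_nat i \<le> Re (z + of_nat i)" using assms by simp
    also have "\<dots> \<le> norm (z + of_nat i)" by (rule complex_Re_le_cmod)
    finally show "0 \<le> a + real i \<and> a + real i \<le> norm (z + of_nat i)" using assms by simp
  qed
  also have "\<dots> = norm (pochhammer z n)" by (simp add: pochhammer_prod prod_norm atLeast0LessThan)
  finally show ?thesis .
qed

lemma pochhammer_le_fact:
  fixes a :: real
  assumes "0 \<le> a" "a \<le> 1"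
  shows "pochhammer a n \<le> fact n"
proof -
  have "pochhammer a n \<le> pochhammer 1 n"
    unfolding pochhammer_prod using assms by (intro prod_mono) auto
  then show ?thesis by (simp add: pochhammer_fact)
qed

text \<open>Splitting off \<open>(\<alpha>)_m\<close> from \<open>(\<alpha>)_(n+1)\<close> cancels the numerator; the rest is compared
  factorwise with \<open>(a)_(n+1) = (a)_m (a + m)_(n+1-m)\<close>, using \<open>(a)_m \<le> m!\<close>.\<close>
lemma norm_pochhammer_ratio_le:
  fixes \<alpha> :: complex
  assumes a: "0 < a" "a \<le> 1" "a \<le> Re \<alpha>" and "m \<le> n"
  shows "norm (pochhammer \<alpha> m / fact m * (fact n / pochhammer \<alpha> (n + 1)))
           \<le> fact n / pochhammer a (n + 1)"
proof -
  define d where "d = n + 1 - m"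
  have d: "n + 1 = m + d" using \<open>m \<le> n\<close> by (simp add: d_def)
  have split_\<alpha>: "pochhammer \<alpha> (n + 1) = pochhammer \<alpha> m * pochhammer (\<alpha> + of_nat m) d"
    unfolding d by (rule pochhammer_product')
  have split_a: "pochhammer a (n + 1) = pochhammer a m * pochhammer (a + of_nat m) d"
    unfolding d by (rule pochhammer_product')
  have head: "pochhammer a m \<le> norm (pochhammer \<alpha> m)"
    using a by (intro pochhammer_le_norm_pochhammer) auto
  have tail: "pochhammer (a + of_nat m) d \<le> norm (pochhammer (\<alpha> + of_nat m) d)"
    using a by (intro pochhammer_le_norm_pochhammer) auto
  have pos_head: "0 < pochhammer a m" and pos_tail: "0 < pochhammer (a + of_nat m) d"
    using a by (auto intro!: pochhammer_pos)
  have "pochhammer \<alpha> m \<noteq> 0" using head pos_head by auto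
  then have "norm (pochhammer \<alpha> m / fact m * (fact n / pochhammer \<alpha> (n + 1)))
             = fact n / (fact m * norm (pochhammer (\<alpha> + of_nat m) d))"
    unfolding split_\<alpha> by (simp add: norm_mult norm_divide norm_fact field_simps)
  also have "\<dots> \<le> fact n / (pochhammer a m * pochhammer (a + of_nat m) d)"
    using pos_head pos_tail tail pochhammer_le_fact[OF _ \<open>a \<le> 1\<close>, of m] a
    by (intro divide_left_mono mult_mono mult_pos_pos) auto
  finally show ?thesis unfolding split_a .
qed

text \<open>\<open>m! m\<^sup>a / (a)_(m+1)\<close> is Gauss's sequence converging to \<open>\<Gamma>(a)\<close>, hence bounded.\<close>
lemma fact_div_pochhammer_le_powr:
  fixes a :: real
  assumes "0 < a"
  obtains G where "\<And>m. fact m / pochhammer a (m + 1) \<le> G * (real m + 1) powr (- a)"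
proof -
  have "convergent (Gamma_series a)" using Gamma_series_LIMSEQ[of a] by (auto simp: convergent_def)
  then have "Bseq (Gamma_series a)" by (rule convergent_imp_Bseq)
  then obtain B where B: "0 < B" "\<And>m. norm (Gamma_series a m) \<le> B"
    by (auto simp: Bseq_def)
  define G where "G = B * 2 powr a + 1 / a"
  have "fact m / pochhammer a (m + 1) \<le> G * (real m + 1) powr (- a)" for m
  proof (cases "m = 0")
    case True
    then show ?thesis using \<open>0 < a\<close> B by (simp add: G_def)
  next
    case False
    have "Gamma_series a m = fact m * real m powr a / pochhammer a (m + 1)"
      using False by (simp add: Gamma_series_def powr_def)
    then have "fact m / pochhammer a (m + 1) = Gamma_series a m * real m powr (- a)"
      using False by (simp add: powr_minus field_simps)
    also have "\<dots> \<le> B * real m powr (- a)"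
      using B(2)[of m] by (intro mult_right_mono) auto
    also have "real m powr (- a) \<le> 2 powr a * (real m + 1) powr (- a)"
    proof -
      have "(real m + 1) powr a \<le> (2 * real m) powr a" using False \<open>0 < a\<close> by (intro powr_mono2) auto
      then show ?thesis using False by (simp add: powr_mult powr_minus field_simps)
    qed
    then have "B * real m powr (- a) \<le> B * (2 powr a * (real m + 1) powr (- a))"
      using B by (intro mult_left_mono) auto
    also have "\<dots> \<le> G * (real m + 1) powr (- a)"
      unfolding G_def using \<open>0 < a\<close> by (simp add: algebra_simps)
    finally show ?thesis .
  qed
  then show ?thesis by (rule that)
qed

lemma compact_Re_pos_imp_uniform_bound:
  fixes A :: "complex set"
  assumes "compact A" "\<And>z. z \<in> A \<Longrightarrow> 0 < Re z"
  obtains a where "0 < a" "a \<le> 1" "\<And>z. z \<in> A \<Longrightarrow> a \<le> Re z"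
proof (cases "A = {}")
  case True
  then show ?thesis using that[of 1] by simp
next
  case False
  have "compact (Re ` A)"
    using assms(1) by (intro compact_continuous_image continuous_intros)
  then obtain z where "z \<in> A" "\<And>w. w \<in> A \<Longrightarrow> Re z \<le> Re w"
    using compact_attains_inf[of "Re ` A"] False by auto
  then show ?thesis using that[of "min 1 (Re z)"] assms(2) by force
qed

text \<open>\<open>|m + \<beta>|\<close> is at least the distance \<open>d\<close> from \<open>B\<close> to \<open>\<int>\<^sub>\<le>\<^sub>0\<close>, and at least \<open>(m + 1)/2\<close> once
  \<open>m \<ge> 2R + 1\<close> for a bound \<open>R\<close> of \<open>|\<beta>|\<close> on \<open>B\<close>.\<close>
lemma compact_disjoint_nonpos_Ints_imp_linear_bound:
  fixes B :: "complex set"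
  assumes "compact B" "B \<inter> \<int>\<^sub>\<le>\<^sub>0 = {}"
  obtains c where "0 < c" "c \<le> 1"
    "\<And>\<beta> m. \<beta> \<in> B \<Longrightarrow> c * (real m + 1) \<le> norm (of_nat m + \<beta>)"
proof -
  obtain d where d: "0 < d" "\<And>\<beta> z. \<beta> \<in> B \<Longrightarrow> z \<in> \<int>\<^sub>\<le>\<^sub>0 \<Longrightarrow> d \<le> dist \<beta> z"
    using separate_compact_closed[OF assms(1) closed_nonpos_Ints assms(2)] by blast
  obtain R where R: "0 < R" "\<And>\<beta>. \<beta> \<in> B \<Longrightarrow> norm \<beta> \<le> R"
    using compact_imp_bounded[OF assms(1)] unfolding bounded_pos by blast
  define c where "c = min (1/2) (d / (2 * R + 2))"
  have "c \<le> 1/2" unfolding c_def by (rule min.cobounded1)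
  have "c * (real m + 1) \<le> norm (of_nat m + \<beta>)" if \<beta>: "\<beta> \<in> B" for \<beta> m
  proof (cases "2 * R + 1 \<le> real m")
    case True
    have "c * (real m + 1) \<le> (real m + 1) / 2"
      using mult_right_mono[OF \<open>c \<le> 1/2\<close>, of "real m + 1"] by simp
    also have "\<dots> \<le> norm (of_nat m :: complex) - norm \<beta>" using True R(2)[OF \<beta>] by simp
    also have "\<dots> \<le> norm (of_nat m + \<beta>)" by (rule norm_diff_ineq)
    finally show ?thesis .
  next
    case False
    have "c * (real m + 1) \<le> d / (2 * R + 2) * (2 * R + 2)"
      using False R d by (intro mult_mono) (auto simp: c_def)
    also have "\<dots> = d" using R by simp
    also have "\<dots> \<le> dist \<beta> (- of_nat m)" using d(2)[OF \<beta>] by simp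
    finally show ?thesis by (simp add: dist_norm add.commute)
  qed
  moreover have "0 < c" "c \<le> 1" using d R by (auto simp: c_def)
  ultimately show ?thesis using that by blast
qed

definition Zexponent :: "nat list \<Rightarrow> nat \<Rightarrow> nat" where
  "Zexponent k i = (if i = length k - 1 then k ! i - 1 else k ! i)"

lemma Zexponent_ge_1:
  assumes "admissible k" "i < length k"
  shows "1 \<le> Zexponent k i"
  using assms by (auto simp: Zexponent_def admissible_def last_conv_nth Suc_le_eq)

lemma Zterm_eq:
  assumes "length ms = length k" "ms \<noteq> []"
  shows "Zterm k \<alpha> \<beta> ms =
           pochhammer \<alpha> (hd ms) / fact (hd ms) * (fact (last ms) / pochhammer \<alpha> (last ms + 1))
           / (\<Prod>i<length k. (of_nat (ms ! i) + \<beta>) ^ Zexponent k i)"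
proof -
  obtain n where n: "length k = Suc n" using assms by (cases "length k") auto
  then have "last k = k ! n" by (cases k) (auto simp: last_conv_nth)
  have "(\<Prod>i<length k. (of_nat (ms ! i) + \<beta>) ^ Zexponent k i)
        = (\<Prod>i<n. (of_nat (ms ! i) + \<beta>) ^ (k ! i)) * (of_nat (last ms) + \<beta>) ^ (last k - 1)"
    using assms n \<open>last k = k ! n\<close> by (simp add: Zexponent_def last_conv_nth)
  then show ?thesis by (simp add: Zterm_def n)
qed

lemma norm_Zdenominator_ge:
  fixes \<beta> :: complex
  assumes "admissible k"
    and c: "0 < c" "c \<le> 1" "\<And>m::nat. c * (real m + 1) \<le> norm (of_nat m + \<beta>)"
  shows "c ^ sum_list k * (\<Prod>i<length k. real (ms ! i) + 1)
           \<le> norm (\<Prod>i<length k. (of_nat (ms ! i) + \<beta>) ^ Zexponent k i)"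
proof -
  let ?e = "Zexponent k"
  have "(\<Sum>i<length k. ?e i) \<le> (\<Sum>i<length k. k ! i)"
    by (intro sum_mono) (simp add: Zexponent_def)
  also have "\<dots> = sum_list k" by (simp add: sum_list_sum_nth atLeast0LessThan)
  finally have "c ^ sum_list k \<le> c ^ (\<Sum>i<length k. ?e i)"
    using c by (intro power_decreasing) auto
  then have "c ^ sum_list k * (\<Prod>i<length k. real (ms ! i) + 1)
             \<le> c ^ (\<Sum>i<length k. ?e i) * (\<Prod>i<length k. real (ms ! i) + 1)"
    by (intro mult_right_mono prod_nonneg) auto
  also have "\<dots> = (\<Prod>i<length k. c ^ ?e i * (real (ms ! i) + 1))"
    by (simp add: power_sum prod.distrib)
  also have "\<dots> \<le> (\<Prod>i<length k. norm (of_nat (ms ! i) + \<beta>) ^ ?e i)"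
  proof (rule prod_mono)
    fix i assume "i \<in> {..<length k}"
    then have e: "1 \<le> ?e i" using Zexponent_ge_1[OF \<open>admissible k\<close>] by simp
    let ?x = "real (ms ! i) + 1"
    have "c ^ ?e i * ?x \<le> c ^ ?e i * ?x ^ ?e i"
      using e c by (intro mult_left_mono self_le_power) auto
    also have "\<dots> \<le> norm (of_nat (ms ! i) + \<beta>) ^ ?e i"
      using c(1,3) by (simp add: power_mult_distrib[symmetric] power_mono)
    finally show "0 \<le> c ^ ?e i * ?x \<and> c ^ ?e i * ?x \<le> norm (of_nat (ms ! i) + \<beta>) ^ ?e i"
      using c by simp
  qed
  also have "\<dots> = norm (\<Prod>i<length k. (of_nat (ms ! i) + \<beta>) ^ ?e i)"
    by (simp add: prod_norm [symmetric] norm_power)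
  finally show ?thesis .
qed

text \<open>Distributes the decay of the largest variable over all \<open>n\<close> variables.\<close>
lemma powr_div_prod_le_prod_powr:
  fixes x :: "nat \<Rightarrow> real"
  assumes "0 < n" "0 \<le> a" "\<And>i. i < n \<Longrightarrow> 1 \<le> x i" "\<And>i. i < n \<Longrightarrow> x i \<le> y"
  shows "y powr (- a) / (\<Prod>i<n. x i) \<le> (\<Prod>i<n. x i powr (- 1 - a / n))"
proof -
  have "0 < y" using assms(3,4)[of 0] \<open>0 < n\<close> by simp
  then have "y powr (- a) = (\<Prod>i<n. y powr (- a / n))"
    using \<open>0 < n\<close> by (simp add: powr_power)
  also have "\<dots> \<le> (\<Prod>i<n. x i powr (- a / n))"
    using assms less_le_trans[OF zero_less_one]
    by (intro prod_mono conjI powr_mono2') (auto simp: divide_nonneg_pos)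
  finally have "y powr (- a) / (\<Prod>i<n. x i) \<le> (\<Prod>i<n. x i powr (- a / n)) / (\<Prod>i<n. x i)"
    using assms(3) by (intro divide_right_mono prod_nonneg) (auto intro: order_trans[OF zero_le_one])
  also have "\<dots> = (\<Prod>i<n. x i powr (- a / n) / x i)"
    by (rule prod_dividef [symmetric])
  also have "\<dots> = (\<Prod>i<n. x i powr (- 1 - a / n))"
  proof (intro prod.cong refl)
    fix i assume "i \<in> {..<n}"
    then have "0 < x i" using assms(3) less_le_trans[OF zero_less_one] by blast
    then show "x i powr (- a / n) / x i = x i powr (- 1 - a / n)"
      using powr_diff[of "x i" "- a / n" 1] by (simp add: minus_diff_commute)
  qed
  finally show ?thesis .
qed

lemma norm_Zterm_le:
  fixes \<alpha> \<beta> :: complex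
  assumes adm: "admissible k" and ms: "ms \<in> Zdom (length k)"
    and a: "0 < a" "a \<le> 1" "a \<le> Re \<alpha>"
    and c: "0 < c" "c \<le> 1" "\<And>m::nat. c * (real m + 1) \<le> norm (of_nat m + \<beta>)"
    and G: "\<And>m. fact m / pochhammer a (m + 1) \<le> G * (real m + 1) powr (- a)"
  shows "norm (Zterm k \<alpha> \<beta> ms)
           \<le> G / c ^ sum_list k * prod_list (map (\<lambda>m. (real m + 1) powr (- 1 - a / length k)) ms)"
proof -
  define n where "n = length k"
  have "0 < n" using adm by (simp add: n_def admissible_def)
  have len: "length ms = n" and "sorted_wrt (<) ms" using ms by (auto simp: Zdom_def n_def)
  then have "sorted ms" by (simp add: strict_sorted_imp_sorted)
  have "ms \<noteq> []" using len \<open>0 < n\<close> by auto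
  then have last: "last ms = ms ! (n - 1)" and hd: "hd ms = ms ! 0"
    using len by (simp_all add: last_conv_nth hd_conv_nth)
  have le_last: "ms ! i \<le> last ms" if "i < n" for i
    unfolding last using that len \<open>sorted ms\<close> by (intro sorted_nth_mono) auto
  define P where "P = (\<Prod>i<n. real (ms ! i) + 1)"
  have "0 < P" unfolding P_def by (intro prod_pos) auto
  have "0 < 1 / a" using a by simp
  moreover have "1 / a \<le> G" using G[of 0] by simp
  ultimately have "0 \<le> G" by linarith
  have numerator:
    "norm (pochhammer \<alpha> (hd ms) / fact (hd ms) * (fact (last ms) / pochhammer \<alpha> (last ms + 1)))
       \<le> G * (real (last ms) + 1) powr (- a)"
    using norm_pochhammer_ratio_le[OF a, of "hd ms" "last ms"] G[of "last ms"] le_last[of 0] \<open>0 < n\<close>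
    by (simp add: hd)
  have denominator: "c ^ sum_list k * P \<le> norm (\<Prod>i<n. (of_nat (ms ! i) + \<beta>) ^ Zexponent k i)"
    unfolding P_def n_def using norm_Zdenominator_ge[OF adm c] .
  have "norm (Zterm k \<alpha> \<beta> ms) \<le> G * (real (last ms) + 1) powr (- a) / (c ^ sum_list k * P)"
    unfolding Zterm_eq[OF len[unfolded n_def] \<open>ms \<noteq> []\<close>] norm_divide n_def[symmetric]
    using numerator denominator \<open>0 < P\<close> \<open>0 \<le> G\<close> c by (intro frac_le mult_pos_pos) auto
  also have "\<dots> = G / c ^ sum_list k * ((real (last ms) + 1) powr (- a) / P)"
    by simp
  also have "\<dots> \<le> G / c ^ sum_list k * (\<Prod>i<n. (real (ms ! i) + 1) powr (- 1 - a / n))"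
    unfolding P_def using \<open>0 < n\<close> a \<open>0 \<le> G\<close> c le_last
    by (intro mult_left_mono powr_div_prod_le_prod_powr) auto
  also have "(\<Prod>i<n. (real (ms ! i) + 1) powr (- 1 - a / n))
             = prod_list (map (\<lambda>m. (real m + 1) powr (- 1 - a / n)) ms)"
    by (simp add: prod_list_map_conv_prod_nth len)
  finally show ?thesis unfolding n_def .
qed

lemma Zterm_majorant:
  assumes adm: "admissible k" and K: "compact K" "K \<subseteq> Zparams"
  obtains M where "M summable_on Zdom (length k)"
    "\<And>p ms. p \<in> K \<Longrightarrow> ms \<in> Zdom (length k) \<Longrightarrow> norm (Zterm k (fst p) (snd p) ms) \<le> M ms"
proof -
  have "compact (fst ` K)" "compact (snd ` K)"
    using compact_continuous_image[OF continuous_on_fst[OF continuous_on_id] K(1)]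
      compact_continuous_image[OF continuous_on_snd[OF continuous_on_id] K(1)] by auto
  moreover have "0 < Re \<alpha>" if "\<alpha> \<in> fst ` K" for \<alpha>
    using that K(2) by (auto simp: Zparams_def)
  moreover have "snd ` K \<inter> \<int>\<^sub>\<le>\<^sub>0 = {}"
    using K(2) by (force simp: Zparams_def elim!: nonpos_Ints_cases')
  ultimately obtain a c where a: "0 < a" "a \<le> 1" "\<And>p. p \<in> K \<Longrightarrow> a \<le> Re (fst p)"
    and c: "0 < c" "c \<le> 1" "\<And>p m. p \<in> K \<Longrightarrow> c * (real m + 1) \<le> norm (of_nat m + snd p)"
    using compact_Re_pos_imp_uniform_bound[of "fst ` K"]
      compact_disjoint_nonpos_Ints_imp_linear_bound[of "snd ` K"]
    by (metis image_eqI)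
  obtain G where G: "\<And>m. fact m / pochhammer a (m + 1) \<le> G * (real m + 1) powr (- a)"
    using fact_div_pochhammer_le_powr[OF a(1)] by blast
  define f where "f m = (real m + 1) powr (- 1 - a / length k)" for m
  have "summable (\<lambda>m. real (Suc m) powr (- 1 - a / length k))"
    using a adm by (subst summable_Suc_iff) (simp add: summable_real_powr_iff admissible_def)
  then have "summable f"
    unfolding f_def by (simp add: add.commute)
  then have "f summable_on UNIV"
    by (simp add: summable_on_UNIV_nonneg_real_iff f_def)
  then have "(\<lambda>ms. G / c ^ sum_list k * prod_list (map f ms)) summable_on Zdom (length k)"
    by (intro summable_on_cmult_right summable_on_subset[OF summable_on_prod_list_length])
       (auto simp: f_def Zdom_def)
  moreover have "norm (Zterm k (fst p) (snd p) ms) \<le> G / c ^ sum_list k * prod_list (map f ms)"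
    if "p \<in> K" "ms \<in> Zdom (length k)" for p ms
    unfolding f_def using that a c G by (intro norm_Zterm_le adm) auto
  ultimately show ?thesis by (rule that)
qed

theorem lemma2p1:
  fixes k :: "nat list"
  assumes "admissible k"
  shows "(\<forall>p\<in>Zparams.
            ((\<lambda>ms. norm (Zterm k (fst p) (snd p) ms)) summable_on Zdom (length k)))
       \<and> (\<forall>K. compact K \<and> K \<subseteq> Zparams \<longrightarrow>
            uniform_limit K
              (\<lambda>F p. \<Sum>ms\<in>F. Zterm k (fst p) (snd p) ms)
              (\<lambda>p. \<Sum>\<^sub>\<infinity>ms\<in>Zdom (length k). Zterm k (fst p) (snd p) ms)
              (finite_subsets_at_top (Zdom (length k))))"
proof (intro conjI ballI allI impI)
  fix p assume "p \<in> Zparams"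
  then have "{p} \<subseteq> Zparams" by simp
  then obtain M where "M summable_on Zdom (length k)"
    and "\<And>q ms. q \<in> {p} \<Longrightarrow> ms \<in> Zdom (length k) \<Longrightarrow> norm (Zterm k (fst q) (snd q) ms) \<le> M ms"
    using Zterm_majorant[OF assms compact_sing] by blast
  then show "(\<lambda>ms. norm (Zterm k (fst p) (snd p) ms)) summable_on Zdom (length k)"
    by (rule Infinite_Sum.abs_summable_on_comparison_test') simp
next
  fix K :: "(complex \<times> complex) set" assume "compact K \<and> K \<subseteq> Zparams"
  then obtain M where "M summable_on Zdom (length k)"
    and "\<And>p ms. p \<in> K \<Longrightarrow> ms \<in> Zdom (length k) \<Longrightarrow> norm (Zterm k (fst p) (snd p) ms) \<le> M ms"
    using Zterm_majorant[OF assms] by blast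
  then show "uniform_limit K (\<lambda>F p. \<Sum>ms\<in>F. Zterm k (fst p) (snd p) ms)
      (\<lambda>p. \<Sum>\<^sub>\<infinity>ms\<in>Zdom (length k). Zterm k (fst p) (snd p) ms)
      (finite_subsets_at_top (Zdom (length k)))"
    by (intro Weierstrass_m_test_general) auto
qed

end
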